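(* For $n=1,2,\dots$, let $X^n\sim N(0,\Sigma_n)$ where $\Sigma_n\in\mathbb{R}^{n\times n}$ is positive definite, and let $E_n\in\{0,1\}$ be a random variable jointly distributed with $X^n$. If $\lim_{n\to\infty}\Pr\{E_n=0\}=1$, then \[ \lim_{n\to\infty}\frac1n\Big(h(X^n|E_n=0)-h(X^n)\Big)=0. \]
   Context: $h(\cdot)$ denotes differential entropy; $h(X^n|E_n=0)$ is the differential entropy of the conditional distribution of $X^n$ given $\{E_n=0\}$. *)

theory Defs
  imports "HOL-Probability.Probability" "Jordan_Normal_Form.Determinant"
begin

text \<open>Points of R^n are represented as functions nat => real, and R^n carries the
  product Lebesgue-Borel measure on the index set {..<n}.\<close>

abbreviation Rn :: "nat \<Rightarrow> (nat \<Rightarrow> real) measure" where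
  "Rn n \<equiv> PiM {..<n} (\<lambda>_. lborel)"

definition pos_def_mat :: "nat \<Rightarrow> real mat \<Rightarrow> bool" where
  "pos_def_mat n S \<longleftrightarrow> S \<in> carrier_mat n n \<and> transpose_mat S = S \<and>
     (\<forall>v \<in> carrier_vec n. v \<noteq> 0\<^sub>v n \<longrightarrow> scalar_prod v (S *\<^sub>v v) > 0)"

definition gaussian_density :: "nat \<Rightarrow> real mat \<Rightarrow> (nat \<Rightarrow> real) \<Rightarrow> real" where
  "gaussian_density n S x =
     (let P = (SOME P. P \<in> carrier_mat n n \<and> inverts_mat S P); v = vec n x in
      exp (- (1/2) * scalar_prod v (P *\<^sub>v v)) / sqrt ((2 * pi) ^ n * det S))"

definition gaussian_rv :: "'a measure \<Rightarrow> nat \<Rightarrow> real mat \<Rightarrow> ('a \<Rightarrow> nat \<Rightarrow> real) \<Rightarrow> bool" where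
  "gaussian_rv M n S X \<longleftrightarrow> distributed M (Rn n) X (\<lambda>x. ennreal (gaussian_density n S x))"

definition diff_entropy :: "'a measure \<Rightarrow> nat \<Rightarrow> ('a \<Rightarrow> nat \<Rightarrow> real) \<Rightarrow> real" where
  "diff_entropy M n X = prob_space.entropy M (exp 1) (Rn n) X"

definition cond_diff_entropy :: "'a measure \<Rightarrow> nat \<Rightarrow> ('a \<Rightarrow> nat \<Rightarrow> real) \<Rightarrow> 'a set \<Rightarrow> real" where
  "cond_diff_entropy M n X A = diff_entropy (uniform_measure M A) n X"

end

theory Submission
  imports Defs
begin

text \<open>Write the density of \<open>N(0,\<Sigma>)\<close> as \<open>f = exp (-q/2) / Z\<close> with the quadratic form
  \<open>q x = x\<^sup>T \<Sigma>\<^sup>-\<^sup>1 x\<close>. Conditioning on an event of probability \<open>p\<close> multiplies \<open>f\<close> by a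
  function \<open>r\<close> with \<open>0 \<le> r \<le> 1/p\<close>, and the entropy gap becomes
  \<open>1/2 \<integral>(r - 1) q f - \<integral>r ln r f\<close>. The second integral is bounded, and
  \<open>\<integral>|r - 1| f \<le> 2(1/p - 1)\<close>. Scaling \<open>x \<mapsto> t x\<close> shows that \<open>\<integral>exp (q/4) f\<close> and
  \<open>\<integral>exp (-q/4) f\<close> are at most \<open>2\<^sup>n\<^sup>/\<^sup>2\<close>, so \<open>|q|\<close> exceeds a multiple of \<open>n\<close> only with
  exponentially small weight. Hence the gap is at most \<open>8 n (1/p - 1) + 6\<close>, which is \<open>o(n)\<close>
  as \<open>p \<rightarrow> 1\<close>.\<close>

lemma abs_le_exp_quarter_bound:
  fixes y L :: real
  shows "\<bar>y\<bar> \<le> 4 * L + 4 * exp (- L) * (exp (y/4) + exp (- y/4))"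
proof -
  have "\<bar>y\<bar>/4 - L \<le> exp (\<bar>y\<bar>/4 - L)"
    using exp_ge_add_one_self[of "\<bar>y\<bar>/4 - L"] by linarith
  also have "\<dots> = exp (- L) * exp (\<bar>y\<bar>/4)" by (simp add: exp_add[symmetric])
  also have "exp (\<bar>y\<bar>/4) \<le> exp (y/4) + exp (- y/4)"
    by (cases "y \<ge> 0") (auto intro: add_increasing add_increasing2)
  hence "exp (- L) * exp (\<bar>y\<bar>/4) \<le> exp (- L) * (exp (y/4) + exp (- y/4))"
    by (intro mult_left_mono) auto
  finally show ?thesis by linarith
qed

lemma mult_ln_self_bounds:
  fixes r :: real
  assumes "0 \<le> r" "r \<le> 2"
  shows "-1 \<le> r * ln r \<and> r * ln r \<le> 2"
proof (cases "r = 0")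
  case False
  hence r: "0 < r" using assms by simp
  have "ln (1/r) \<le> 1/r - 1" using ln_le_minus_one[of "1/r"] r by simp
  hence "r * (1 - 1/r) \<le> r * ln r" using r by (intro mult_left_mono) (auto simp: ln_div)
  hence lower: "r - 1 \<le> r * ln r" using r by (simp add: algebra_simps)
  have "r * ln r \<le> r * (r - 1)" by (rule mult_left_mono[OF ln_le_minus_one[OF r]]) (use r in simp)
  also have "\<dots> \<le> 2" using mult_nonpos_nonneg[of "r - 2" "r + 1"] assms by (simp add: algebra_simps)
  finally show ?thesis using lower r by simp
qed simp

lemma integrable_and_integral_le_of_nn_integral_le:
  fixes g :: "'a \<Rightarrow> real"
  assumes [measurable]: "g \<in> borel_measurable P" and g0: "\<And>x. 0 \<le> g x"
    and le: "(\<integral>\<^sup>+x. ennreal (g x) \<partial>P) \<le> ennreal K" and K: "0 \<le> K"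
  shows "integrable P g" "(\<integral>x. g x \<partial>P) \<le> K"
proof -
  show "integrable P g"
    by (rule integrableI_bounded) (use le g0 in \<open>auto simp: top.not_eq_extremum intro: le_less_trans\<close>)
  have "(\<integral>x. g x \<partial>P) = enn2real (\<integral>\<^sup>+x. ennreal (g x) \<partial>P)"
    by (rule integral_eq_nn_integral) (auto simp: g0)
  also have "\<dots> \<le> K" using enn2real_mono[OF le] K by simp
  finally show "(\<integral>x. g x \<partial>P) \<le> K" .
qed

lemma nn_integral_eq_1_of_prob_space_density:
  assumes "prob_space (density P f)" and [measurable]: "f \<in> borel_measurable P"
  shows "(\<integral>\<^sup>+x. f x \<partial>P) = 1"
proof -
  have "1 = emeasure (density P f) (space P)"
    using prob_space.emeasure_space_1[OF assms(1)] by simp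
  also have "\<dots> = (\<integral>\<^sup>+x. f x \<partial>P)"
    by (subst emeasure_density) (auto intro!: nn_integral_cong)
  finally show ?thesis by simp
qed

lemma integral_abs_density_minus_one_le:
  fixes r :: "'a \<Rightarrow> real" and c :: real
  assumes "prob_space P" and [measurable]: "r \<in> borel_measurable P"
    and r0: "\<And>x. 0 \<le> r x" and rc: "\<And>x. r x \<le> c" and c: "1 \<le> c"
    and rint: "integral\<^sup>L P r = 1"
  shows "(\<integral>x. \<bar>r x - 1\<bar> \<partial>P) \<le> 2 * (c - 1)"
proof -
  interpret prob_space P by fact
  have ir: "integrable P r" by (rule integrable_const_bound[of _ c]) (use r0 rc in auto)
  have "\<bar>r x - 1\<bar> \<le> 2 * (c - 1) - (r x - 1)" for x
    using rc[of x] c by (simp add: abs_le_iff)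
  hence "(\<integral>x. \<bar>r x - 1\<bar> \<partial>P) \<le> (\<integral>x. 2 * (c - 1) - (r x - 1) \<partial>P)"
    using ir by (intro integral_mono) auto
  also have "\<dots> = 2 * (c - 1)" using ir rint prob_space by (simp add: Bochner_Integration.integral_diff)
  finally show ?thesis .
qed

text \<open>Split \<open>|q|\<close> at level \<open>4 L\<close>: above it, \<open>|q|\<close> is dominated by \<open>4 exp (-L) exp (|q|/4)\<close>.\<close>
lemma abs_integral_mult_le_exp_moment_bound:
  fixes w q :: "'a \<Rightarrow> real" and \<epsilon> K L :: real
  assumes "prob_space P"
    and [measurable]: "w \<in> borel_measurable P" "q \<in> borel_measurable P"
    and w1: "\<And>x. \<bar>w x\<bar> \<le> 1" and wint: "(\<integral>x. \<bar>w x\<bar> \<partial>P) \<le> \<epsilon>"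
    and ie: "integrable P (\<lambda>x. exp (q x / 4))" "integrable P (\<lambda>x. exp (- q x / 4))"
    and Ie: "(\<integral>x. exp (q x / 4) \<partial>P) \<le> K" "(\<integral>x. exp (- q x / 4) \<partial>P) \<le> K"
    and L: "0 \<le> L"
  shows "integrable P q" "\<bar>\<integral>x. w x * q x \<partial>P\<bar> \<le> 4 * L * \<epsilon> + 8 * exp (- L) * K"
proof -
  interpret prob_space P by fact
  define e where "e x = exp (q x / 4) + exp (- q x / 4)" for x
  have e0: "0 \<le> e x" for x unfolding e_def by (intro add_nonneg_nonneg) auto
  have ie': "integrable P e" unfolding e_def using ie by auto
  have qB: "\<bar>q x\<bar> \<le> 4 * L + 4 * exp (- L) * e x" for x
    unfolding e_def by (rule abs_le_exp_quarter_bound)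
  show iq: "integrable P q"
  proof (rule Bochner_Integration.integrable_bound)
    show "integrable P (\<lambda>x. 4 * L + 4 * exp (- L) * e x)" using ie' by auto
    show "AE x in P. norm (q x) \<le> norm (4 * L + 4 * exp (- L) * e x)"
      using qB by (intro AE_I2) (simp, meson abs_ge_self order_trans)
  qed simp
  have iw: "integrable P (\<lambda>x. \<bar>w x\<bar>)" by (rule integrable_const_bound[of _ 1]) (use w1 in auto)
  have iwq: "integrable P (\<lambda>x. w x * q x)"
    by (rule Bochner_Integration.integrable_bound[OF iq])
      (use w1 in \<open>auto simp: abs_mult intro!: AE_I2 mult_left_le_one_le\<close>)
  have wq: "\<bar>w x * q x\<bar> \<le> 4 * L * \<bar>w x\<bar> + 4 * exp (- L) * e x" for x
  proof -
    have "\<bar>w x * q x\<bar> \<le> \<bar>w x\<bar> * (4 * L + 4 * exp (- L) * e x)"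
      using qB[of x] by (simp add: abs_mult mult_left_mono)
    also have "\<dots> = 4 * L * \<bar>w x\<bar> + \<bar>w x\<bar> * (4 * exp (- L) * e x)" by (simp add: algebra_simps)
    also have "\<bar>w x\<bar> * (4 * exp (- L) * e x) \<le> 4 * exp (- L) * e x"
      using w1[of x] e0[of x] by (intro mult_left_le_one_le) auto
    finally show ?thesis by simp
  qed
  have "\<bar>\<integral>x. w x * q x \<partial>P\<bar> \<le> (\<integral>x. \<bar>w x * q x\<bar> \<partial>P)" by (rule integral_abs_bound)
  also have "\<dots> \<le> (\<integral>x. 4 * L * \<bar>w x\<bar> + 4 * exp (- L) * e x \<partial>P)"
    by (rule integral_mono) (use wq iwq iw ie' in auto)
  also have "\<dots> = 4 * L * (\<integral>x. \<bar>w x\<bar> \<partial>P) + 4 * exp (- L) * ((\<integral>x. exp (q x / 4) \<partial>P) + (\<integral>x. exp (- q x / 4) \<partial>P))"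
    using iw ie unfolding e_def by simp
  also have "\<dots> \<le> 4 * L * \<epsilon> + 4 * exp (- L) * (K + K)"
    by (intro add_mono mult_left_mono wint Ie) (use L in auto)
  finally show "\<bar>\<integral>x. w x * q x \<partial>P\<bar> \<le> 4 * L * \<epsilon> + 8 * exp (- L) * K" by simp
qed

lemma abs_integral_mult_le_of_exp_moments_sqrt2_pow:
  fixes w q :: "'a \<Rightarrow> real" and n :: nat and \<epsilon> :: real
  assumes "prob_space P"
    and [measurable]: "w \<in> borel_measurable P" "q \<in> borel_measurable P"
    and "\<And>x. \<bar>w x\<bar> \<le> 1" "(\<integral>x. \<bar>w x\<bar> \<partial>P) \<le> \<epsilon>" "0 \<le> \<epsilon>"
    and "integrable P (\<lambda>x. exp (q x / 4))" "integrable P (\<lambda>x. exp (- q x / 4))"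
    and "(\<integral>x. exp (q x / 4) \<partial>P) \<le> sqrt 2 ^ n" "(\<integral>x. exp (- q x / 4) \<partial>P) \<le> sqrt 2 ^ n"
  shows "integrable P q" "\<bar>\<integral>x. w x * q x \<partial>P\<bar> \<le> 8 * real n * \<epsilon> + 8"
proof -
  define L where "L = n * (ln 2 / 2 + 1)"
  have L0: "0 \<le> L" unfolding L_def using ln_ge_zero[of 2] by simp
  note bound = abs_integral_mult_le_exp_moment_bound[OF assms(1-5) assms(7-10) L0]
  show "integrable P q" by (fact bound(1))
  have "exp (- L) * sqrt 2 ^ n = exp (- real n)"
  proof -
    have "sqrt 2 ^ n = exp (n * (ln 2 / 2))"
      by (simp add: exp_of_nat_mult ln_sqrt[symmetric])
    thus ?thesis unfolding L_def by (simp add: exp_add[symmetric] algebra_simps)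
  qed
  hence "8 * exp (- L) * sqrt 2 ^ n \<le> 8" by simp
  moreover have "4 * L * \<epsilon> \<le> 8 * real n * \<epsilon>"
  proof -
    have "ln 2 / 2 + 1 \<le> (2::real)" using ln_2_less_1 by simp
    hence "real n * (ln 2 / 2 + 1) \<le> real n * 2" by (rule mult_left_mono) simp
    hence "L \<le> 2 * real n" unfolding L_def by simp
    thus ?thesis using mult_right_mono[OF _ \<open>0 \<le> \<epsilon>\<close>] by force
  qed
  ultimately show "\<bar>\<integral>x. w x * q x \<partial>P\<bar> \<le> 8 * real n * \<epsilon> + 8" using bound(2) by linarith
qed

lemma emeasure_lborel_mult_vimage:
  fixes t :: real
  assumes t: "0 < t" and A: "A \<in> sets borel"
  shows "ennreal t * emeasure lborel ((*) t -` A) = emeasure lborel A"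
proof -
  have "emeasure lborel A = emeasure (density (distr lborel borel (\<lambda>x. 0 + t * x)) (\<lambda>_. ennreal \<bar>t\<bar>)) A"
    by (subst lborel_real_affine[of t 0]) (use t in simp_all)
  also have "\<dots> = ennreal \<bar>t\<bar> * emeasure (distr lborel borel (\<lambda>x. 0 + t * x)) A"
    by (rule emeasure_density_const) (use A in simp)
  also have "emeasure (distr lborel borel (\<lambda>x. 0 + t * x)) A = emeasure lborel ((\<lambda>x. 0 + t * x) -` A \<inter> space lborel)"
    by (rule emeasure_distr) (use A in auto)
  finally show ?thesis using t by (simp add: vimage_def)
qed

lemma density_distr_PiM_lborel_scale:
  fixes t :: real
  assumes t: "0 < t"
  shows "density (distr (Rn n) (Rn n) (\<lambda>x. \<lambda>i\<in>{..<n}. t * x i)) (\<lambda>_. ennreal (t ^ n)) = Rn n"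
proof -
  interpret product_sigma_finite "\<lambda>_::nat. lborel::real measure"
    by (simp add: product_sigma_finite_def sigma_finite_lborel)
  define T where "T = (\<lambda>x::nat\<Rightarrow>real. \<lambda>i\<in>{..<n}. t * x i)"
  have T[measurable]: "T \<in> measurable (Rn n) (Rn n)" unfolding T_def by measurable
  show ?thesis unfolding T_def[symmetric]
  proof (rule PiM_eqI)
    fix A :: "nat \<Rightarrow> real set" assume A: "\<And>i. i \<in> {..<n} \<Longrightarrow> A i \<in> sets lborel"
    have VA: "(*) t -` A i \<in> sets borel" if "i < n" for i
      using measurable_sets[of "(*) t" borel borel "A i"] A[of i] that by simp
    have PA: "Pi\<^sub>E {..<n} A \<in> sets (Rn n)" using A by (intro sets_PiM_I_finite) auto
    have vim: "T -` Pi\<^sub>E {..<n} A \<inter> space (Rn n) = Pi\<^sub>E {..<n} (\<lambda>i. (*) t -` A i)"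
      unfolding T_def by (auto simp: space_PiM PiE_def Pi_def extensional_def)
    have "emeasure (density (distr (Rn n) (Rn n) T) (\<lambda>_. ennreal (t ^ n))) (Pi\<^sub>E {..<n} A)
        = ennreal (t ^ n) * emeasure (Rn n) (Pi\<^sub>E {..<n} (\<lambda>i. (*) t -` A i))"
      using PA vim by (simp add: emeasure_density_const emeasure_distr)
    also have "\<dots> = ennreal (t ^ n) * (\<Prod>i<n. emeasure lborel ((*) t -` A i))"
      by (subst emeasure_PiM) (use VA in auto)
    also have "\<dots> = (\<Prod>i<n. ennreal t * emeasure lborel ((*) t -` A i))"
      using t by (simp add: prod.distrib ennreal_power)
    also have "\<dots> = (\<Prod>i<n. emeasure lborel (A i))"
      by (rule prod.cong) (use A t emeasure_lborel_mult_vimage in auto)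
    finally show "emeasure (density (distr (Rn n) (Rn n) T) (\<lambda>_. ennreal (t ^ n))) (Pi\<^sub>E {..<n} A)
        = (\<Prod>i\<in>{..<n}. emeasure lborel (A i))"
      by (simp add: lessThan_def)
  qed simp_all
qed

lemma nn_integral_PiM_lborel_scale:
  fixes t :: real
  assumes t: "0 < t" and [measurable]: "h \<in> borel_measurable (Rn n)"
  shows "(\<integral>\<^sup>+x. h x \<partial>Rn n) = ennreal (t ^ n) * (\<integral>\<^sup>+x. h (\<lambda>i\<in>{..<n}. t * x i) \<partial>Rn n)"
proof -
  define T where "T = (\<lambda>x::nat\<Rightarrow>real. \<lambda>i\<in>{..<n}. t * x i)"
  have T[measurable]: "T \<in> measurable (Rn n) (Rn n)" unfolding T_def by measurable
  have "(\<integral>\<^sup>+x. h x \<partial>Rn n) = (\<integral>\<^sup>+x. h x \<partial>density (distr (Rn n) (Rn n) T) (\<lambda>_. ennreal (t ^ n)))"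
    using density_distr_PiM_lborel_scale[OF t, of n] unfolding T_def by simp
  also have "\<dots> = (\<integral>\<^sup>+x. ennreal (t ^ n) * h (T x) \<partial>Rn n)"
    by (simp add: nn_integral_density nn_integral_distr)
  also have "\<dots> = ennreal (t ^ n) * (\<integral>\<^sup>+x. h (T x) \<partial>Rn n)"
    by (rule nn_integral_cmult) measurable
  finally show ?thesis unfolding T_def .
qed

text \<open>For \<open>q\<close> homogeneous of degree 2, substituting \<open>x \<mapsto> t x\<close> with \<open>t = sqrt (1 - 2 s)\<close>
  turns \<open>exp (-q/2) exp (s q)\<close> into \<open>exp (-q/2)\<close>.\<close>
lemma nn_integral_exp_homogeneous_moment:
  fixes q :: "(nat \<Rightarrow> real) \<Rightarrow> real" and Z s :: real
  assumes [measurable]: "q \<in> borel_measurable (Rn n)"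
    and hom: "\<And>t x. 0 < t \<Longrightarrow> q (\<lambda>i\<in>{..<n}. t * x i) = t\<^sup>2 * q x"
    and int: "(\<integral>\<^sup>+x. ennreal (exp (- q x / 2) / Z) \<partial>Rn n) = 1"
    and Z: "0 < Z" and s: "s < 1/2"
  shows "(\<integral>\<^sup>+x. ennreal (exp (- q x / 2) / Z) * ennreal (exp (s * q x)) \<partial>Rn n)
       = ennreal (1 / sqrt (1 - 2 * s) ^ n)"
proof -
  define t where "t = sqrt (1 - 2 * s)"
  have t: "0 < t" "t\<^sup>2 = 1 - 2 * s" unfolding t_def using s by auto
  define I where "I = (\<integral>\<^sup>+x. ennreal (exp (- q x / 2) / Z) * ennreal (exp (s * q x)) \<partial>Rn n)"
  have "1 = ennreal (t ^ n) * (\<integral>\<^sup>+x. ennreal (exp (- q (\<lambda>i\<in>{..<n}. t * x i) / 2) / Z) \<partial>Rn n)"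
    unfolding int[symmetric] by (rule nn_integral_PiM_lborel_scale[OF t(1)]) measurable
  also have "(\<integral>\<^sup>+x. ennreal (exp (- q (\<lambda>i\<in>{..<n}. t * x i) / 2) / Z) \<partial>Rn n) = I"
    unfolding I_def hom[OF t(1)] t(2) using Z
    by (intro nn_integral_cong) (simp add: ennreal_mult[symmetric] exp_add[symmetric] field_simps)
  finally have "ennreal (1 / t ^ n) = (ennreal (1 / t ^ n) * ennreal (t ^ n)) * I"
    by (simp only: mult.assoc) simp
  also have "ennreal (1 / t ^ n) * ennreal (t ^ n) = 1"
    using t by (simp add: ennreal_mult[symmetric])
  finally show ?thesis unfolding I_def t_def by simp
qed

lemma nn_integral_exp_quarter_moments:
  fixes q :: "(nat \<Rightarrow> real) \<Rightarrow> real" and Z :: real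
  assumes "q \<in> borel_measurable (Rn n)"
    and "\<And>t x. 0 < t \<Longrightarrow> q (\<lambda>i\<in>{..<n}. t * x i) = t\<^sup>2 * q x"
    and "(\<integral>\<^sup>+x. ennreal (exp (- q x / 2) / Z) \<partial>Rn n) = 1" and "0 < Z"
  shows "(\<integral>\<^sup>+x. ennreal (exp (- q x / 2) / Z) * ennreal (exp (q x / 4)) \<partial>Rn n) \<le> ennreal (sqrt 2 ^ n)"
    "(\<integral>\<^sup>+x. ennreal (exp (- q x / 2) / Z) * ennreal (exp (- q x / 4)) \<partial>Rn n) \<le> ennreal (sqrt 2 ^ n)"
proof -
  note moment = nn_integral_exp_homogeneous_moment[OF assms]
  show "(\<integral>\<^sup>+x. ennreal (exp (- q x / 2) / Z) * ennreal (exp (q x / 4)) \<partial>Rn n) \<le> ennreal (sqrt 2 ^ n)"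
    using moment[of "1/4"] by (simp add: real_sqrt_divide power_one_over mult.commute)
  have "1 / sqrt (3/2) ^ n \<le> (1::real)" by (simp add: one_le_power)
  also have "1 \<le> sqrt (2::real) ^ n" by (simp add: one_le_power)
  finally show "(\<integral>\<^sup>+x. ennreal (exp (- q x / 2) / Z) * ennreal (exp (- q x / 4)) \<partial>Rn n) \<le> ennreal (sqrt 2 ^ n)"
    using moment[of "-1/4"] by (simp add: ennreal_leI mult.commute)
qed

lemma (in finite_measure) AE_le_of_nn_integral_indicator_le:
  fixes f :: "'a \<Rightarrow> ennreal"
  assumes [measurable]: "f \<in> borel_measurable M" and c: "c \<noteq> \<infinity>"
    and le: "\<And>B. B \<in> sets M \<Longrightarrow> (\<integral>\<^sup>+x. f x * indicator B x \<partial>M) \<le> c * emeasure M B"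
  shows "AE x in M. f x \<le> c"
proof -
  define B where "B = {x \<in> space M. c < f x}"
  have [measurable]: "B \<in> sets M" unfolding B_def by measurable
  have fin: "(\<integral>\<^sup>+x. c * indicator B x \<partial>M) \<noteq> \<infinity>"
    using c by (simp add: nn_integral_cmult_indicator ennreal_mult_eq_top_iff)
  have "AE x in M. f x * indicator B x \<le> c * indicator B x"
  proof (rule ccontr)
    assume "\<not> (AE x in M. f x * indicator B x \<le> c * indicator B x)"
    hence "(\<integral>\<^sup>+x. c * indicator B x \<partial>M) < (\<integral>\<^sup>+x. f x * indicator B x \<partial>M)"
      by (intro nn_integral_less fin)
         (auto simp: B_def indicator_def intro!: AE_I2 less_imp_le)
    also have "\<dots> \<le> (\<integral>\<^sup>+x. c * indicator B x \<partial>M)"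
      using le[of B] by (simp add: nn_integral_cmult_indicator)
    finally show False by simp
  qed
  with AE_space show ?thesis
  proof eventually_elim
    fix x assume "x \<in> space M" "f x * indicator B x \<le> c * indicator B x"
    thus "f x \<le> c" by (cases "c < f x") (auto simp: B_def)
  qed
qed

lemma (in finite_measure) bounded_density_of_emeasure_le:
  fixes c :: real
  assumes sets_eq: "sets Q = sets M" and c: "0 \<le> c"
    and le: "\<And>B. B \<in> sets M \<Longrightarrow> emeasure Q B \<le> ennreal c * emeasure M B"
  shows "\<exists>r \<in> borel_measurable M. (\<forall>x. 0 \<le> r x \<and> r x \<le> c) \<and> Q = density M (\<lambda>x. ennreal (r x))"
proof -
  have ac: "absolutely_continuous M Q"
    unfolding absolutely_continuous_def
  proof
    fix B assume "B \<in> null_sets M"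
    thus "B \<in> null_sets Q" using le[of B] sets_eq by (auto simp: null_sets_def)
  qed
  define \<rho> where "\<rho> = RN_deriv M Q"
  have [measurable]: "\<rho> \<in> borel_measurable M" unfolding \<rho>_def by simp
  have Q: "density M \<rho> = Q" unfolding \<rho>_def by (rule density_RN_deriv[OF ac sets_eq])
  have "AE x in M. \<rho> x \<le> ennreal c"
  proof (rule AE_le_of_nn_integral_indicator_le)
    fix B assume [measurable]: "B \<in> sets M"
    have "(\<integral>\<^sup>+x. \<rho> x * indicator B x \<partial>M) = emeasure Q B"
      unfolding Q[symmetric] by (simp add: emeasure_density)
    thus "(\<integral>\<^sup>+x. \<rho> x * indicator B x \<partial>M) \<le> ennreal c * emeasure M B" using le by simp
  qed auto
  define r where "r x = min (enn2real (\<rho> x)) c" for x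
  have "AE x in M. \<rho> x = ennreal (r x)"
    using \<open>AE x in M. \<rho> x \<le> ennreal c\<close>
  proof eventually_elim
    fix x assume "\<rho> x \<le> ennreal c"
    then obtain y where "\<rho> x = ennreal y" "0 \<le> y" "y \<le> c"
      using c by (cases "\<rho> x") (auto simp: ennreal_le_iff2 top_unique)
    thus "\<rho> x = ennreal (r x)" unfolding r_def by simp
  qed
  hence "Q = density M (\<lambda>x. ennreal (r x))"
    unfolding Q[symmetric] by (intro density_cong) (auto simp: r_def)
  moreover have "\<forall>x. 0 \<le> r x \<and> r x \<le> c" unfolding r_def using c by auto
  moreover have "r \<in> borel_measurable M" unfolding r_def by measurable
  ultimately show ?thesis by blast
qed

lemma emeasure_distr_uniform_measure_le:
  assumes "prob_space M" and A: "A \<in> sets M" and pA: "0 < measure M A"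
    and [measurable]: "X \<in> measurable M N" and B: "B \<in> sets N"
  shows "emeasure (distr (uniform_measure M A) N X) B \<le> ennreal (1 / measure M A) * emeasure (distr M N X) B"
proof -
  interpret prob_space M by fact
  have XU[measurable]: "X \<in> measurable (uniform_measure M A) N"
    using measurable_cong_sets[OF sets_uniform_measure refl, of M A N] by simp
  have XB[measurable]: "X -` B \<inter> space M \<in> sets M" using B by measurable
  have "emeasure (distr (uniform_measure M A) N X) B = emeasure (uniform_measure M A) (X -` B \<inter> space M)"
    using B by (subst emeasure_distr) (auto simp: sets_eq_imp_space_eq[OF sets_uniform_measure])
  also have "\<dots> = emeasure M (A \<inter> (X -` B \<inter> space M)) / emeasure M A"
    by (rule emeasure_uniform_measure[OF A XB])
  also have "\<dots> \<le> emeasure M (X -` B \<inter> space M) / emeasure M A"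
    by (intro divide_right_mono_ennreal emeasure_mono) auto
  also have "\<dots> = ennreal (1 / measure M A) * emeasure (distr M N X) B"
    using pA B
    by (simp add: emeasure_distr emeasure_eq_measure divide_ennreal_def inverse_ennreal mult.commute inverse_eq_divide)
  finally show ?thesis .
qed

lemma uniform_measure_distr_bounded_density:
  assumes M: "prob_space M" and A: "A \<in> sets M" and pA: "0 < measure M A"
    and X: "X \<in> measurable M N"
  shows "\<exists>r \<in> borel_measurable N. (\<forall>x. 0 \<le> r x \<and> r x \<le> 1 / measure M A) \<and>
            distr (uniform_measure M A) N X = density (distr M N X) (\<lambda>x. ennreal (r x)) \<and>
            integral\<^sup>L (distr M N X) r = 1"
proof -
  interpret M: prob_space M by fact
  interpret P: prob_space "distr M N X" using X by (rule M.prob_space_distr)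
  have "\<exists>r \<in> borel_measurable (distr M N X). (\<forall>x. 0 \<le> r x \<and> r x \<le> 1 / measure M A) \<and>
      distr (uniform_measure M A) N X = density (distr M N X) (\<lambda>x. ennreal (r x))"
    using emeasure_distr_uniform_measure_le[OF M A pA X] pA
    by (intro P.bounded_density_of_emeasure_le) auto
  then obtain r where [measurable]: "r \<in> borel_measurable (distr M N X)"
    and r: "\<forall>x. 0 \<le> r x \<and> r x \<le> 1 / measure M A"
    and Q: "distr (uniform_measure M A) N X = density (distr M N X) (\<lambda>x. ennreal (r x))"
    by blast
  have "prob_space (uniform_measure M A)"
    using pA by (intro prob_space_uniform_measure) (auto simp: M.emeasure_eq_measure)
  hence "prob_space (density (distr M N X) (\<lambda>x. ennreal (r x)))"
    unfolding Q[symmetric] using measurable_cong_sets[OF sets_uniform_measure refl, of M A N] X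
    by (intro prob_space.prob_space_distr) auto
  hence "(\<integral>\<^sup>+x. ennreal (r x) \<partial>distr M N X) = 1" by (rule nn_integral_eq_1_of_prob_space_density) simp
  hence "integral\<^sup>L (distr M N X) r = 1" using r by (subst integral_eq_nn_integral) auto
  thus ?thesis using r Q by auto
qed

lemma pos_def_mat_has_inverse:
  assumes pd: "pos_def_mat n S"
  shows "\<exists>P. P \<in> carrier_mat n n \<and> inverts_mat S P"
proof -
  have S: "S \<in> carrier_mat n n" using pd unfolding pos_def_mat_def by auto
  have "det S \<noteq> 0"
  proof
    assume "det S = 0"
    then obtain v where v: "v \<in> carrier_vec n" "v \<noteq> 0\<^sub>v n" "S *\<^sub>v v = 0\<^sub>v n"
      using det_0_iff_vec_prod_zero[OF S] by auto
    thus False using pd unfolding pos_def_mat_def by auto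
  qed
  from det_non_zero_imp_unit[OF S this, of "()"]
  obtain B where "B \<in> carrier_mat n n" "S * B = 1\<^sub>m n"
    by (auto simp: Units_def ring_mat_def)
  thus ?thesis unfolding inverts_mat_def using S by auto
qed

definition precision_mat :: "nat \<Rightarrow> real mat \<Rightarrow> real mat" where
  "precision_mat n S = (SOME P. P \<in> carrier_mat n n \<and> inverts_mat S P)"

definition quad_form :: "nat \<Rightarrow> real mat \<Rightarrow> (nat \<Rightarrow> real) \<Rightarrow> real" where
  "quad_form n P x = scalar_prod (vec n x) (P *\<^sub>v vec n x)"

lemma precision_mat_carrier: "pos_def_mat n S \<Longrightarrow> precision_mat n S \<in> carrier_mat n n"
  unfolding precision_mat_def using someI_ex[OF pos_def_mat_has_inverse] by blast

lemma gaussian_density_eq_quad_form: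
  "gaussian_density n S x = exp (- quad_form n (precision_mat n S) x / 2) / sqrt ((2 * pi) ^ n * det S)"
  unfolding gaussian_density_def quad_form_def precision_mat_def Let_def by simp

lemma quad_form_eq_sum:
  "P \<in> carrier_mat n n \<Longrightarrow> quad_form n P x = (\<Sum>i<n. x i * (\<Sum>j<n. P $$ (i, j) * x j))"
  unfolding quad_form_def scalar_prod_def
  by (auto simp: atLeast0LessThan mult_mat_vec_def row_def scalar_prod_def intro!: sum.cong)

lemma quad_form_scale:
  "P \<in> carrier_mat n n \<Longrightarrow> quad_form n P (\<lambda>i\<in>{..<n}. t * x i) = t\<^sup>2 * quad_form n P x"
  by (auto simp: quad_form_eq_sum sum_distrib_left power2_eq_square algebra_simps intro!: sum.cong)

lemma quad_form_measurable:
  assumes "P \<in> carrier_mat n n"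
  shows "quad_form n P \<in> borel_measurable (Rn n)"
proof -
  have [measurable]: "(\<lambda>x. x i) \<in> borel_measurable (Rn n)" if "i < n" for i
    using measurable_component_singleton[of i "{..<n}" "\<lambda>_. lborel"] that by simp
  have "(\<lambda>x. \<Sum>i<n. x i * (\<Sum>j<n. P $$ (i, j) * x j)) \<in> borel_measurable (Rn n)" by measurable
  moreover have "quad_form n P = (\<lambda>x. \<Sum>i<n. x i * (\<Sum>j<n. P $$ (i, j) * x j))"
    using quad_form_eq_sum[OF assms] by (simp add: fun_eq_iff)
  ultimately show ?thesis by simp
qed

lemma distributed_normalizer_pos:
  fixes g :: "'b \<Rightarrow> real"
  assumes "prob_space M" and D: "distributed M N X (\<lambda>x. ennreal (g x / Z))" and g0: "\<And>x. 0 \<le> g x"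
  shows "0 < Z"
proof (rule ccontr)
  assume "\<not> 0 < Z"
  hence "ennreal (g x / Z) = 0" for x using g0[of x] by (simp add: divide_nonneg_nonpos ennreal_neg)
  thus False using prob_space.distributed_imp_emeasure_nonzero[OF assms(1) D] by simp
qed

lemma entropy_eq_integral_density_mult:
  fixes f g :: "'b \<Rightarrow> real"
  assumes S: "sigma_finite_measure S" and M: "prob_space M"
    and [measurable]: "f \<in> borel_measurable S" "g \<in> borel_measurable S"
    and f0: "\<And>x. 0 \<le> f x" and g0: "\<And>x. 0 \<le> g x"
    and D: "distr M S X = density S (\<lambda>x. ennreal (f x * g x))"
  shows "prob_space.entropy M (exp 1) S X = - (\<integral>x. g x * ln (f x * g x) \<partial>density S (\<lambda>x. ennreal (f x)))"
proof -
  interpret sigma_finite_measure S by fact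
  have "prob_space.entropy M (exp 1) S X = - KL_divergence (exp 1) S (distr M S X)"
    by (rule prob_space.entropy_def[OF M])
  also have "KL_divergence (exp 1) S (distr M S X) = (\<integral>x. (f x * g x) * log (exp 1) (f x * g x) \<partial>S)"
    unfolding D by (rule KL_density) (auto simp: f0 g0)
  also have "\<dots> = (\<integral>x. g x * ln (f x * g x) \<partial>density S (\<lambda>x. ennreal (f x)))"
    by (subst integral_density) (auto simp: f0 log_ln[symmetric] ac_simps)
  finally show ?thesis by simp
qed

lemma integrable_mult_ln_self_and_abs_integral_le:
  fixes r :: "'a \<Rightarrow> real"
  assumes "prob_space P" and [measurable]: "r \<in> borel_measurable P"
    and r0: "\<And>x. 0 \<le> r x" and r2: "\<And>x. r x \<le> 2"
  shows "integrable P (\<lambda>x. r x * ln (r x))" "\<bar>\<integral>x. r x * ln (r x) \<partial>P\<bar> \<le> 2"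
proof -
  interpret prob_space P by fact
  have b: "-1 \<le> r x * ln (r x) \<and> r x * ln (r x) \<le> 2" for x using mult_ln_self_bounds[OF r0 r2] .
  have "\<bar>r x * ln (r x)\<bar> \<le> 2" for x using b[of x] unfolding abs_le_iff by linarith
  thus i: "integrable P (\<lambda>x. r x * ln (r x))" by (intro integrable_const_bound[of _ 2]) auto
  have "(\<integral>x. -1 \<partial>P) \<le> (\<integral>x. r x * ln (r x) \<partial>P)" "(\<integral>x. r x * ln (r x) \<partial>P) \<le> (\<integral>x. 2 \<partial>P)"
    by (intro integral_mono i; use b in simp)+
  thus "\<bar>\<integral>x. r x * ln (r x) \<partial>P\<bar> \<le> 2" by (simp add: prob_space)
qed

lemma distributed_exp_quarter_moments:
  fixes q :: "(nat \<Rightarrow> real) \<Rightarrow> real" and Z :: real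
  assumes M: "prob_space M" and D: "distributed M (Rn n) X (\<lambda>x. ennreal (exp (- q x / 2) / Z))"
    and [measurable]: "q \<in> borel_measurable (Rn n)"
    and hom: "\<And>t x. 0 < t \<Longrightarrow> q (\<lambda>i\<in>{..<n}. t * x i) = t\<^sup>2 * q x"
  shows "integrable (distr M (Rn n) X) (\<lambda>x. exp (q x / 4))"
    "integrable (distr M (Rn n) X) (\<lambda>x. exp (- q x / 4))"
    "(\<integral>x. exp (q x / 4) \<partial>distr M (Rn n) X) \<le> sqrt 2 ^ n"
    "(\<integral>x. exp (- q x / 4) \<partial>distr M (Rn n) X) \<le> sqrt 2 ^ n"
proof -
  have Z: "0 < Z" by (rule distributed_normalizer_pos[OF M D]) simp
  have P: "distr M (Rn n) X = density (Rn n) (\<lambda>x. ennreal (exp (- q x / 2) / Z))"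
    using D by (simp add: distributed_def)
  have "prob_space (distr M (Rn n) X)"
    using M D by (intro prob_space.prob_space_distr) (auto simp: distributed_def)
  hence "(\<integral>\<^sup>+x. ennreal (exp (- q x / 2) / Z) \<partial>Rn n) = 1"
    unfolding P by (rule nn_integral_eq_1_of_prob_space_density) simp
  note moments = nn_integral_exp_quarter_moments[OF _ hom this Z]
  have "(\<integral>\<^sup>+x. ennreal (exp (q x / 4)) \<partial>distr M (Rn n) X) \<le> ennreal (sqrt 2 ^ n)"
    "(\<integral>\<^sup>+x. ennreal (exp (- q x / 4)) \<partial>distr M (Rn n) X) \<le> ennreal (sqrt 2 ^ n)"
    unfolding P using moments by (simp_all add: nn_integral_density)
  note bounds = integrable_and_integral_le_of_nn_integral_le[OF _ exp_ge_zero this(1)]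
    integrable_and_integral_le_of_nn_integral_le[OF _ exp_ge_zero this(2)]
  show "integrable (distr M (Rn n) X) (\<lambda>x. exp (q x / 4))"
    "integrable (distr M (Rn n) X) (\<lambda>x. exp (- q x / 4))"
    "(\<integral>x. exp (q x / 4) \<partial>distr M (Rn n) X) \<le> sqrt 2 ^ n"
    "(\<integral>x. exp (- q x / 4) \<partial>distr M (Rn n) X) \<le> sqrt 2 ^ n"
    by (rule bounds; simp)+
qed

lemma diff_entropy_eq_integral:
  fixes f :: "(nat \<Rightarrow> real) \<Rightarrow> real"
  assumes M: "prob_space M" and D: "distributed M (Rn n) X (\<lambda>x. ennreal (f x))"
    and [measurable]: "f \<in> borel_measurable (Rn n)" and f0: "\<And>x. 0 \<le> f x"
  shows "diff_entropy M n X = - (\<integral>x. ln (f x) \<partial>distr M (Rn n) X)"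
proof -
  interpret product_sigma_finite "\<lambda>_::nat. lborel::real measure"
    by (simp add: product_sigma_finite_def sigma_finite_lborel)
  have "diff_entropy M n X = - (\<integral>x. 1 * ln (f x * 1) \<partial>density (Rn n) (\<lambda>x. ennreal (f x)))"
    unfolding diff_entropy_def
    by (rule entropy_eq_integral_density_mult[OF sigma_finite M]) (use D f0 in \<open>auto simp: distributed_def\<close>)
  thus ?thesis using D by (simp add: distributed_def)
qed

lemma cond_diff_entropy_eq_integral:
  fixes f r :: "(nat \<Rightarrow> real) \<Rightarrow> real"
  assumes M: "prob_space M" and A: "A \<in> sets M" "0 < measure M A"
    and D: "distributed M (Rn n) X (\<lambda>x. ennreal (f x))"
    and [measurable]: "f \<in> borel_measurable (Rn n)" "r \<in> borel_measurable (Rn n)"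
    and f0: "\<And>x. 0 \<le> f x" and r0: "\<And>x. 0 \<le> r x"
    and Q: "distr (uniform_measure M A) (Rn n) X = density (distr M (Rn n) X) (\<lambda>x. ennreal (r x))"
  shows "cond_diff_entropy M n X A = - (\<integral>x. r x * ln (f x * r x) \<partial>distr M (Rn n) X)"
proof -
  interpret M: prob_space M by fact
  interpret product_sigma_finite "\<lambda>_::nat. lborel::real measure"
    by (simp add: product_sigma_finite_def sigma_finite_lborel)
  have UP: "prob_space (uniform_measure M A)"
    using A by (intro prob_space_uniform_measure) (auto simp: M.emeasure_eq_measure)
  have P: "distr M (Rn n) X = density (Rn n) (\<lambda>x. ennreal (f x))" using D by (simp add: distributed_def)
  show ?thesis
    unfolding cond_diff_entropy_def diff_entropy_def P
  proof (rule entropy_eq_integral_density_mult[OF sigma_finite UP])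
    show "distr (uniform_measure M A) (Rn n) X = density (Rn n) (\<lambda>x. ennreal (f x * r x))"
      unfolding Q P using f0 r0 by (subst density_density_eq) (auto simp: ennreal_mult)
  qed (auto simp: f0 r0)
qed

lemma cond_diff_entropy_minus_diff_entropy_eq:
  fixes q r :: "(nat \<Rightarrow> real) \<Rightarrow> real" and Z :: real
  assumes M: "prob_space M" and A: "A \<in> sets M" "0 < measure M A"
    and D: "distributed M (Rn n) X (\<lambda>x. ennreal (exp (- q x / 2) / Z))"
    and [measurable]: "q \<in> borel_measurable (Rn n)" and rm[measurable]: "r \<in> borel_measurable (Rn n)"
    and r0: "\<And>x. 0 \<le> r x" and r2: "\<And>x. r x \<le> 2"
    and Q: "distr (uniform_measure M A) (Rn n) X = density (distr M (Rn n) X) (\<lambda>x. ennreal (r x))"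
    and iq: "integrable (distr M (Rn n) X) q" and rint: "integral\<^sup>L (distr M (Rn n) X) r = 1"
  shows "cond_diff_entropy M n X A - diff_entropy M n X
       = (1/2) * (\<integral>x. (r x - 1) * q x \<partial>distr M (Rn n) X) - (\<integral>x. r x * ln (r x) \<partial>distr M (Rn n) X)"
proof -
  define P where "P = distr M (Rn n) X"
  interpret P: prob_space P unfolding P_def using M D by (intro prob_space.prob_space_distr) (auto simp: distributed_def)
  have Z: "0 < Z" by (rule distributed_normalizer_pos[OF M D]) simp
  define f where "f x = exp (- q x / 2) / Z" for x
  have fm[measurable]: "f \<in> borel_measurable (Rn n)" unfolding f_def by measurable
  have f0: "0 < f x" for x unfolding f_def using Z by simp
  have ln_f: "ln (f x) = - (q x / 2 + ln Z)" for x unfolding f_def using Z by (simp add: ln_div)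
  have split_ln: "r x * ln (f x * r x) = - (1/2) * ((r x - 1) * q x) - (1/2) * q x - ln Z * r x + r x * ln (r x)" for x
  proof (cases "r x = 0")
    case False
    hence "ln (f x * r x) = - q x / 2 - ln Z + ln (r x)" using f0[of x] r0[of x] by (simp add: ln_mult ln_f)
    thus ?thesis by (simp only:) (simp add: algebra_simps)
  qed simp
  have rP[measurable]: "r \<in> borel_measurable P" and [measurable]: "q \<in> borel_measurable P"
    unfolding P_def by simp_all
  have w1: "\<bar>r x - 1\<bar> \<le> 1" for x using r0[of x] r2[of x] by (simp add: abs_le_iff)
  have ir: "integrable P r" using r0 r2 by (intro P.integrable_const_bound[where B=2]) auto
  have irl: "integrable P (\<lambda>x. r x * ln (r x))"
    by (rule integrable_mult_ln_self_and_abs_integral_le(1)[OF P.prob_space_axioms rP r0 r2])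
  have irq: "integrable P (\<lambda>x. (r x - 1) * q x)"
    using iq unfolding P_def[symmetric]
  proof (rule Bochner_Integration.integrable_bound)
    show "AE x in P. norm ((r x - 1) * q x) \<le> norm (q x)"
      using w1 by (auto simp: abs_mult intro!: AE_I2 mult_left_le_one_le)
  qed measurable
  have "cond_diff_entropy M n X A = - (\<integral>x. r x * ln (f x * r x) \<partial>P)"
    unfolding P_def by (rule cond_diff_entropy_eq_integral[OF M A D[folded f_def] fm rm less_imp_le[OF f0] r0 Q])
  also have "\<dots> = (1/2) * (\<integral>x. (r x - 1) * q x \<partial>P) + (1/2) * (\<integral>x. q x \<partial>P) + ln Z - (\<integral>x. r x * ln (r x) \<partial>P)"
    unfolding split_ln using irq iq ir irl rint unfolding P_def by simp
  finally have cond: "cond_diff_entropy M n X A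
      = (1/2) * (\<integral>x. (r x - 1) * q x \<partial>P) + (1/2) * (\<integral>x. q x \<partial>P) + ln Z - (\<integral>x. r x * ln (r x) \<partial>P)" .
  have "diff_entropy M n X = - (\<integral>x. ln (f x) \<partial>P)"
    unfolding P_def by (rule diff_entropy_eq_integral[OF M D[folded f_def] fm less_imp_le[OF f0]])
  also have "\<dots> = (1/2) * (\<integral>x. q x \<partial>P) + ln Z"
    unfolding ln_f integral_minus using iq P.prob_space unfolding P_def[symmetric]
    by (subst Bochner_Integration.integral_add) auto
  finally show ?thesis unfolding cond P_def by simp
qed

lemma gaussian_entropy_gap_le:
  fixes M :: "'a measure" and X :: "'a \<Rightarrow> nat \<Rightarrow> real" and S :: "real mat"
  assumes M: "prob_space M" and pd: "pos_def_mat n S" and G: "gaussian_rv M n S X"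
    and A: "A \<in> sets M" and pA: "1/2 \<le> measure M A"
  shows "\<bar>cond_diff_entropy M n X A - diff_entropy M n X\<bar> \<le> 8 * real n * (1 / measure M A - 1) + 6"
proof -
  define p where "p = measure M A"
  define q where "q = quad_form n (precision_mat n S)"
  define P where "P = distr M (Rn n) X"
  have p: "1/2 \<le> p" "p \<le> 1" unfolding p_def using pA prob_space.prob_le_1[OF M] by auto
  have qm[measurable]: "q \<in> borel_measurable (Rn n)"
    unfolding q_def by (rule quad_form_measurable[OF precision_mat_carrier[OF pd]])
  have hom: "\<And>t x. 0 < t \<Longrightarrow> q (\<lambda>i\<in>{..<n}. t * x i) = t\<^sup>2 * q x"
    unfolding q_def by (rule quad_form_scale[OF precision_mat_carrier[OF pd]])
  have D: "distributed M (Rn n) X (\<lambda>x. ennreal (exp (- q x / 2) / sqrt ((2 * pi) ^ n * det S)))"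
    using G unfolding gaussian_rv_def gaussian_density_eq_quad_form q_def .
  have Pp: "prob_space P" unfolding P_def using M D by (intro prob_space.prob_space_distr) (auto simp: distributed_def)
  obtain r where [measurable]: "r \<in> borel_measurable (Rn n)" and r: "\<And>x. 0 \<le> r x" "\<And>x. r x \<le> 1/p"
    and Q: "distr (uniform_measure M A) (Rn n) X = density P (\<lambda>x. ennreal (r x))"
    and rint: "integral\<^sup>L P r = 1"
    using uniform_measure_distr_bounded_density[OF M A _ distributed_measurable[OF D]] p
    unfolding p_def P_def by auto
  have "1/p \<le> 2" using p by (simp add: pos_divide_le_eq)
  hence r2: "r x \<le> 2" for x using r(2)[of x] by linarith
  have rP[measurable]: "r \<in> borel_measurable P" and qP[measurable]: "q \<in> borel_measurable P"
    unfolding P_def by simp_all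
  have w: "(\<integral>x. \<bar>r x - 1\<bar> \<partial>P) \<le> 2 * (1/p - 1)"
    by (rule integral_abs_density_minus_one_le[OF Pp rP r _ rint]) (use p in auto)
  note moments = distributed_exp_quarter_moments[OF M D qm hom, folded P_def]
  have w1: "\<bar>r x - 1\<bar> \<le> 1" for x using r(1)[of x] r2[of x] by (simp add: abs_le_iff)
  have "0 \<le> 2 * (1/p - 1)" using p by (simp add: field_simps)
  moreover have "(\<lambda>x. r x - 1) \<in> borel_measurable P" by measurable
  ultimately have iq: "integrable P q"
    and qbound: "\<bar>\<integral>x. (r x - 1) * q x \<partial>P\<bar> \<le> 8 * real n * (2 * (1/p - 1)) + 8"
    using abs_integral_mult_le_of_exp_moments_sqrt2_pow[OF Pp _ qP w1 w _ moments] by blast+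
  have gap: "cond_diff_entropy M n X A - diff_entropy M n X
      = (1/2) * (\<integral>x. (r x - 1) * q x \<partial>P) - (\<integral>x. r x * ln (r x) \<partial>P)"
    unfolding P_def
    by (rule cond_diff_entropy_minus_diff_entropy_eq[OF M A _ D _ _ r(1) r2])
       (use p Q iq rint in \<open>auto simp: p_def P_def\<close>)
  have "\<bar>(1/2) * (\<integral>x. (r x - 1) * q x \<partial>P) - (\<integral>x. r x * ln (r x) \<partial>P)\<bar>
      \<le> (1/2) * \<bar>\<integral>x. (r x - 1) * q x \<partial>P\<bar> + \<bar>\<integral>x. r x * ln (r x) \<partial>P\<bar>" by arith
  also have "\<dots> \<le> (1/2) * (8 * real n * (2 * (1/p - 1)) + 8) + 2"
    by (intro add_mono mult_left_mono qbound integrable_mult_ln_self_and_abs_integral_le(2)[OF Pp _ r(1) r2])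
       (auto simp: P_def)
  finally show ?thesis unfolding gap p_def by (simp add: algebra_simps)
qed

theorem lemma13:
  fixes M :: "nat \<Rightarrow> 'a measure"
    and X :: "nat \<Rightarrow> 'a \<Rightarrow> nat \<Rightarrow> real"
    and E :: "nat \<Rightarrow> 'a \<Rightarrow> nat"
    and \<Sigma> :: "nat \<Rightarrow> real mat"
  assumes "\<And>n. n \<ge> 1 \<Longrightarrow> prob_space (M n)"
    and "\<And>n. n \<ge> 1 \<Longrightarrow> pos_def_mat n (\<Sigma> n)"
    and "\<And>n. n \<ge> 1 \<Longrightarrow> gaussian_rv (M n) n (\<Sigma> n) (X n)"
    and "\<And>n. n \<ge> 1 \<Longrightarrow> E n \<in> measurable (M n) (count_space UNIV)"
    and "\<And>n \<omega>. n \<ge> 1 \<Longrightarrow> \<omega> \<in> space (M n) \<Longrightarrow> E n \<omega> \<in> {0, 1}"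
    and "(\<lambda>n. measure (M n) {\<omega> \<in> space (M n). E n \<omega> = 0}) \<longlonglongrightarrow> 1"
  shows "(\<lambda>n. (cond_diff_entropy (M n) n (X n) {\<omega> \<in> space (M n). E n \<omega> = 0}
                 - diff_entropy (M n) n (X n)) / real n) \<longlonglongrightarrow> 0"
proof -
  define A where "A n = {\<omega> \<in> space (M n). E n \<omega> = 0}" for n
  define p where "p n = measure (M n) (A n)" for n
  define gap where "gap n = cond_diff_entropy (M n) n (X n) (A n) - diff_entropy (M n) n (X n)" for n
  have p: "p \<longlonglongrightarrow> 1" using assms(6) unfolding p_def A_def .
  have A: "A n \<in> sets (M n)" if "1 \<le> n" for n
    using measurable_sets[OF assms(4)[OF that], of "{0}"] by (simp add: A_def vimage_def Int_def conj_commute)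
  have "eventually (\<lambda>n. 1/2 < p n) sequentially" by (rule order_tendstoD(1)[OF p]) simp
  hence "eventually (\<lambda>n. 1/2 \<le> p n \<and> 1 \<le> n) sequentially"
    using eventually_ge_at_top[of 1] by eventually_elim auto
  hence "eventually (\<lambda>n. norm (gap n / real n) \<le> 8 * (1 / p n - 1) + 6 / real n) sequentially"
  proof eventually_elim
    case (elim n)
    hence "\<bar>gap n\<bar> \<le> 8 * real n * (1 / p n - 1) + 6"
      using gaussian_entropy_gap_le[OF assms(1-3)[of n] A[of n]] unfolding gap_def p_def by simp
    hence "\<bar>gap n\<bar> / real n \<le> (8 * real n * (1 / p n - 1) + 6) / real n"
      by (rule divide_right_mono) simp
    also have "\<dots> = 8 * (1 / p n - 1) + 6 / real n" using elim by (simp add: add_divide_distrib)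
    finally show ?case by simp
  qed
  moreover have "(\<lambda>n. 8 * (1 / p n - 1) + 6 / real n) \<longlonglongrightarrow> 8 * (1 / 1 - 1) + 0"
    by (intro tendsto_intros p lim_const_over_n) simp
  hence "(\<lambda>n. 8 * (1 / p n - 1) + 6 / real n) \<longlonglongrightarrow> 0" by simp
  ultimately have "(\<lambda>n. gap n / real n) \<longlonglongrightarrow> 0" by (rule Lim_null_comparison)
  thus ?thesis unfolding gap_def A_def .
qed

end
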